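(* In a qubit stabilizer subsystem code with encoded qubits $\mathcal{H}_e=\bigotimes_{j=1}^{n_L}\mathcal{H}_j$, let $S\subseteq\{1,\dots,n_L\}$ and let $R$ be a region of physical qubits that obeys complementary recovery and is dressed-cleanable with respect to the logical subsystem given by $S$. Then $R$ is correctable with respect to $S$.
   Context: Stabilizer code: abelian subgroup of the Pauli group not containing $-\mathrm{Id}$, code space its $+1$ eigenspace, encoding isometry $V$ from the encoded space $\bigotimes_j\mathcal{H}_j$ of encoded qubits (with a basis such that codespace-preserving physical Paulis implement encoded Paulis); $\Pi=VV^\dagger$. For $S\subseteq\{1,\dots,n_L\}$, the logical subsystem is $\mathcal{H}_L=\bigotimes_{j\in S}\mathcal{H}_j$ and the junk subsystem $\mathcal{H}_J=\bigotimes_{j\notin S}\mathcal{H}_j$. $A$ is CSP if $[A,\Pi]=0$; dressed-CSP if moreover $V^\dagger AV=A_L\otimes A_J$; bare-CSP if also $A_J=\mathrm{Id}_J$. Supported on $R$: of the form $A_R\otimes\mathrm{Id}_{R^c}$. $R$ is correctable w.r.t. $S$ if every $A_L\in\mathcal{B}(\mathcal{H}_L)$ is implemented as $A_L\otimes\mathrm{Id}_J$ by a bare-CSP operator supported on $R^c$; dressed-cleanable w.r.t. $S$ if every Pauli $P_L$ on $\mathcal{H}_L$ is implemented as $P_L\otimes P_J$ (some $P_J$) by a dressed-CSP operator supported on $R^c$. Maximal entanglement wedge: $\mathcal{E}[R]$ is the set of $j$ such that $R^c$ is correctable w.r.t. $\{j\}$. $R$ obeys complementary recovery if $\mathcal{E}[R]\cup\mathcal{E}[R^c]=\{1,\dots,n_L\}$.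 *)

theory Defs
  imports "Jordan_Normal_Form.Schur_Decomposition"
begin

(* Qubits are indexed 0,1,2,...; a system of m qubits has the computational basis
   indexed by i < 2^m, and bit j of i is the value of qubit j. *)

definition qbits :: "nat \<Rightarrow> nat set" where
  "qbits i = {j. odd (i div 2 ^ j)}"

definition ind :: "nat set \<Rightarrow> nat \<Rightarrow> nat" where
  "ind x j = (if j \<in> x then 1 else 0)"

(* single-qubit Pauli matrices: 0 = Id, 1 = X, 2 = Y, 3 = Z *)
definition pauli_mat :: "nat \<Rightarrow> complex mat" where
  "pauli_mat k = (if k = 1 then mat_of_rows_list 2 [[0,1],[1,0]]
     else if k = 2 then mat_of_rows_list 2 [[0,-\<i>],[\<i>,0]]
     else if k = 3 then mat_of_rows_list 2 [[1,0],[0,-1]]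
     else 1\<^sub>m 2)"

definition pauli_phases :: "complex set" where
  "pauli_phases = {1, -1, \<i>, -\<i>}"

(* Kernel (matrix entries, as a function of basis bitstrings restricted to the qubit set T)
   of the Pauli operator  c * (tensor_{j in T} sigma_{p j})  on the qubits in T *)
definition pauli_fun :: "complex \<Rightarrow> (nat \<Rightarrow> nat) \<Rightarrow> nat set \<Rightarrow> nat set \<Rightarrow> nat set \<Rightarrow> complex" where
  "pauli_fun c p T x y = c * (\<Prod>j\<in>T. pauli_mat (p j) $$ (ind x j, ind y j))"

definition is_pauli_fun :: "nat set \<Rightarrow> (nat set \<Rightarrow> nat set \<Rightarrow> complex) \<Rightarrow> bool" where
  "is_pauli_fun T f \<longleftrightarrow> (\<exists>c p. c \<in> pauli_phases \<and> (\<forall>j. p j < 4) \<and> f = pauli_fun c p T)"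

definition pauli_group :: "nat \<Rightarrow> complex mat set" where
  "pauli_group n = {mat (2^n) (2^n) (\<lambda>(i,k). pauli_fun c p {..<n} (qbits i) (qbits k)) | c p.
      c \<in> pauli_phases \<and> (\<forall>j. p j < 4)}"

(* operator on m qubits of the form  A_T \<otimes> B_{T^c}, with A_T, B given by kernels on
   bitstrings of T and of {..<m} - T respectively *)
definition tensor_split :: "nat \<Rightarrow> nat set \<Rightarrow> (nat set \<Rightarrow> nat set \<Rightarrow> complex)
    \<Rightarrow> (nat set \<Rightarrow> nat set \<Rightarrow> complex) \<Rightarrow> complex mat" where
  "tensor_split m T A B = mat (2^m) (2^m) (\<lambda>(i,k).
      A (qbits i \<inter> T) (qbits k \<inter> T) * B (qbits i \<inter> ({..<m} - T)) (qbits k \<inter> ({..<m} - T)))"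

definition id_fun :: "nat set \<Rightarrow> nat set \<Rightarrow> complex" where
  "id_fun x y = (if x = y then 1 else 0)"

definition supported_on :: "nat \<Rightarrow> nat set \<Rightarrow> complex mat \<Rightarrow> bool" where
  "supported_on n R A \<longleftrightarrow> (\<exists>AR. A = tensor_split n R AR id_fun)"

(* Stabilizer code on n physical qubits with stabilizer group G and encoding isometry V
   from n_L encoded qubits; the basis of the encoded space is such that codespace-preserving
   physical Paulis implement encoded Paulis. *)
definition stabilizer_code :: "nat \<Rightarrow> nat \<Rightarrow> complex mat set \<Rightarrow> complex mat \<Rightarrow> bool" where
  "stabilizer_code n nL G V \<longleftrightarrow>
     G \<subseteq> pauli_group n \<and>
     1\<^sub>m (2^n) \<in> G \<and>
     (\<forall>g\<in>G. \<forall>h\<in>G. g * h \<in> G) \<and>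
     (\<forall>g\<in>G. mat_adjoint g \<in> G) \<and>
     (\<forall>g\<in>G. \<forall>h\<in>G. g * h = h * g) \<and>
     - 1\<^sub>m (2^n) \<notin> G \<and>
     V \<in> carrier_mat (2^n) (2^nL) \<and>
     mat_adjoint V * V = 1\<^sub>m (2^nL) \<and>
     (\<forall>\<psi> \<in> carrier_vec (2^n). (\<forall>g\<in>G. g *\<^sub>v \<psi> = \<psi>) \<longleftrightarrow>
          (\<exists>\<phi> \<in> carrier_vec (2^nL). \<psi> = V *\<^sub>v \<phi>)) \<and>
     (\<forall>P \<in> pauli_group n. P * (V * mat_adjoint V) = (V * mat_adjoint V) * P \<longrightarrow>
          mat_adjoint V * P * V \<in> pauli_group nL)"

definition code_proj :: "complex mat \<Rightarrow> complex mat" where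
  "code_proj V = V * mat_adjoint V"

definition CSP :: "complex mat \<Rightarrow> complex mat \<Rightarrow> bool" where
  "CSP V A \<longleftrightarrow> A * code_proj V = code_proj V * A"

definition dressed_CSP :: "nat \<Rightarrow> complex mat \<Rightarrow> nat set \<Rightarrow> complex mat \<Rightarrow> bool" where
  "dressed_CSP nL V S A \<longleftrightarrow> CSP V A \<and>
     (\<exists>AL AJ. mat_adjoint V * A * V = tensor_split nL S AL AJ)"

definition bare_CSP :: "nat \<Rightarrow> complex mat \<Rightarrow> nat set \<Rightarrow> complex mat \<Rightarrow> bool" where
  "bare_CSP nL V S A \<longleftrightarrow> CSP V A \<and>
     (\<exists>AL. mat_adjoint V * A * V = tensor_split nL S AL id_fun)"

definition correctable :: "nat \<Rightarrow> nat \<Rightarrow> complex mat \<Rightarrow> nat set \<Rightarrow> nat set \<Rightarrow> bool" where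
  "correctable n nL V S R \<longleftrightarrow>
     (\<forall>AL. \<exists>A. A \<in> carrier_mat (2^n) (2^n) \<and> CSP V A \<and> supported_on n ({..<n} - R) A \<and>
        mat_adjoint V * A * V = tensor_split nL S AL id_fun)"

definition dressed_cleanable :: "nat \<Rightarrow> nat \<Rightarrow> complex mat \<Rightarrow> nat set \<Rightarrow> nat set \<Rightarrow> bool" where
  "dressed_cleanable n nL V S R \<longleftrightarrow>
     (\<forall>PL. is_pauli_fun S PL \<longrightarrow> (\<exists>A PJ. is_pauli_fun ({..<nL} - S) PJ \<and>
        A \<in> carrier_mat (2^n) (2^n) \<and> CSP V A \<and> supported_on n ({..<n} - R) A \<and>
        mat_adjoint V * A * V = tensor_split nL S PL PJ))"

definition entanglement_wedge :: "nat \<Rightarrow> nat \<Rightarrow> complex mat \<Rightarrow> nat set \<Rightarrow> nat set" where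
  "entanglement_wedge n nL V R = {j. j < nL \<and> correctable n nL V {j} ({..<n} - R)}"

definition complementary_recovery :: "nat \<Rightarrow> nat \<Rightarrow> complex mat \<Rightarrow> nat set \<Rightarrow> bool" where
  "complementary_recovery n nL V R \<longleftrightarrow>
     entanglement_wedge n nL V R \<union> entanglement_wedge n nL V ({..<n} - R) = {..<nL}"

end

theory Submission
  imports Defs
begin

(* If a logical qubit j of S lay in the entanglement wedge of R, the projector |0><0| on qubit j
   would be implemented by an operator supported on R, while dressed cleanability implements X on
   qubit j, dressed by a Pauli operator on the junk qubits, by an operator supported on the
   complement of R. The two physical operators commute since their supports are disjoint, and
   compression by V is multiplicative on code-space preserving operators; but the two logical
   operators do not commute. Hence, by complementary recovery, every j in S lies in the wedge of
   the complement of R: every operator on qubit j has a bare implementation outside R. Such bare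
   implementations are closed under sums and under products over disjoint sets of logical qubits,
   and every operator on the qubits of S is a sum of products of single-qubit matrix units. *)

lemma qbits_subset_lessThan: "i < 2^m \<Longrightarrow> qbits i \<subseteq> {..<m}"
proof
  fix j assume i: "i < 2^m" and "j \<in> qbits i"
  then have "i div 2^j \<noteq> 0" by (metis qbits_def mem_Collect_eq even_zero)
  then have "2^j \<le> i" by (simp add: div_eq_0_iff)
  with i have "(2::nat)^j < 2^m" by linarith
  then show "j \<in> {..<m}" by simp
qed

lemma qbits_inject: "qbits i = qbits k \<Longrightarrow> i = k"
  by (simp add: qbits_def bit_eq_iff bit_iff_odd set_eq_iff)

lemma bij_betw_qbits: "bij_betw qbits {..<2^m} (Pow {..<m})"
proof -
  have inj: "inj_on qbits {..<2^m}" by (meson inj_onI qbits_inject)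
  moreover have "card (qbits ` {..<2^m}) = card (Pow {..<m})"
    using card_image[OF inj] by (simp add: card_Pow)
  then have "qbits ` {..<2^m} = Pow {..<m}"
    using qbits_subset_lessThan by (intro card_subset_eq) auto
  ultimately show ?thesis by (simp add: bij_betw_def)
qed

definition kernel_mat :: "nat \<Rightarrow> (nat set \<Rightarrow> nat set \<Rightarrow> complex) \<Rightarrow> complex mat" where
  "kernel_mat m K = mat (2^m) (2^m) (\<lambda>(i,k). K (qbits i) (qbits k))"

lemma dim_row_kernel_mat [simp]: "dim_row (kernel_mat m K) = 2^m"
  and dim_col_kernel_mat [simp]: "dim_col (kernel_mat m K) = 2^m"
  by (simp_all add: kernel_mat_def)

lemma kernel_mat_cong:
  assumes "\<And>x y. x \<subseteq> {..<m} \<Longrightarrow> y \<subseteq> {..<m} \<Longrightarrow> K x y = K' x y"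
  shows "kernel_mat m K = kernel_mat m K'"
  using assms qbits_subset_lessThan by (intro eq_matI) (auto simp: kernel_mat_def)

lemma kernel_mat_eqD:
  assumes "kernel_mat m K = kernel_mat m K'" "x \<subseteq> {..<m}" "y \<subseteq> {..<m}"
  shows "K x y = K' x y"
proof -
  have "x \<in> qbits ` {..<2^m}" "y \<in> qbits ` {..<2^m}"
    using assms(2,3) bij_betw_qbits[of m] by (auto simp: bij_betw_def)
  then obtain i k where "i < 2^m" "x = qbits i" "k < 2^m" "y = qbits k" by auto
  with arg_cong[OF assms(1), of "\<lambda>M. M $$ (i,k)"] show ?thesis by (simp add: kernel_mat_def)
qed

lemma kernel_mat_add: "kernel_mat m K + kernel_mat m K' = kernel_mat m (\<lambda>x y. K x y + K' x y)"
  by (intro eq_matI) (auto simp: kernel_mat_def)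

lemma kernel_mat_smult: "c \<cdot>\<^sub>m kernel_mat m K = kernel_mat m (\<lambda>x y. c * K x y)"
  by (intro eq_matI) (auto simp: kernel_mat_def)

lemma kernel_mat_id_fun: "kernel_mat m id_fun = 1\<^sub>m (2^m)"
  by (intro eq_matI) (auto simp: kernel_mat_def id_fun_def dest: qbits_inject)

lemma kernel_mat_mult:
  "kernel_mat m K * kernel_mat m K' = kernel_mat m (\<lambda>x y. \<Sum>z\<in>Pow {..<m}. K x z * K' z y)"
proof (rule eq_matI)
  fix i k assume "i < dim_row (kernel_mat m (\<lambda>x y. \<Sum>z\<in>Pow {..<m}. K x z * K' z y))"
    and "k < dim_col (kernel_mat m (\<lambda>x y. \<Sum>z\<in>Pow {..<m}. K x z * K' z y))"
  then have i: "i < 2^m" and k: "k < 2^m" by simp_all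
  have "(kernel_mat m K * kernel_mat m K') $$ (i,k) = (\<Sum>l<2^m. K (qbits i) (qbits l) * K' (qbits l) (qbits k))"
    using i k by (simp add: scalar_prod_def atLeast0LessThan kernel_mat_def)
  also have "\<dots> = (\<Sum>z\<in>Pow {..<m}. K (qbits i) z * K' z (qbits k))"
    by (rule sum.reindex_bij_betw[OF bij_betw_qbits])
  finally show "(kernel_mat m K * kernel_mat m K') $$ (i,k) =
      kernel_mat m (\<lambda>x y. \<Sum>z\<in>Pow {..<m}. K x z * K' z y) $$ (i,k)"
    using i k by (simp add: kernel_mat_def)
qed auto

lemma tensor_split_eq_kernel_mat:
  "tensor_split m T A B =
     kernel_mat m (\<lambda>x y. A (x \<inter> T) (y \<inter> T) * B (x \<inter> ({..<m} - T)) (y \<inter> ({..<m} - T)))"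
  by (simp add: tensor_split_def kernel_mat_def)

lemma tensor_split_add:
  "tensor_split m T A id_fun + tensor_split m T B id_fun = tensor_split m T (\<lambda>x y. A x y + B x y) id_fun"
  unfolding tensor_split_eq_kernel_mat kernel_mat_add by (simp add: distrib_right)

lemma tensor_split_smult:
  "c \<cdot>\<^sub>m tensor_split m T A id_fun = tensor_split m T (\<lambda>x y. c * A x y) id_fun"
  unfolding tensor_split_eq_kernel_mat kernel_mat_smult by (simp add: mult.assoc)

lemma tensor_split_empty: "tensor_split m {} A id_fun = A {} {} \<cdot>\<^sub>m 1\<^sub>m (2^m)"
  unfolding tensor_split_eq_kernel_mat kernel_mat_smult kernel_mat_id_fun[symmetric]
  by (rule kernel_mat_cong) (simp add: Int_absorb2)

lemma tensor_split_id_fun_mult: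
  assumes T: "T \<subseteq> {..<m}"
  shows "tensor_split m T A id_fun * kernel_mat m K =
    kernel_mat m (\<lambda>x y. \<Sum>c\<in>Pow T. A (x \<inter> T) c * K (c \<union> (x - T)) y)"
  unfolding tensor_split_eq_kernel_mat kernel_mat_mult
proof (rule kernel_mat_cong)
  fix x y assume x: "x \<subseteq> {..<m}"
  define M where "M = {..<m}"
  define h where "h c = c \<union> (x - T)" for c
  let ?g = "\<lambda>z. A (x \<inter> T) (z \<inter> T) * id_fun (x \<inter> (M - T)) (z \<inter> (M - T)) * K z y"
  have "inj_on h (Pow T)"
    by (rule inj_onI) (auto simp: h_def)
  have "sum ?g (Pow M) = sum ?g (h ` Pow T)"
  proof (rule sum.mono_neutral_right)
    show "h ` Pow T \<subseteq> Pow M" using T x by (auto simp: h_def M_def)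
    show "\<forall>z\<in>Pow M - h ` Pow T. ?g z = 0"
    proof
      fix z assume z: "z \<in> Pow M - h ` Pow T"
      have "z \<noteq> h (z \<inter> T)" using z by (metis DiffD2 Int_lower2 PowI imageI)
      moreover have "z = h (z \<inter> T)" if "x \<inter> (M - T) = z \<inter> (M - T)"
        using that z x unfolding h_def M_def by blast
      ultimately have "x \<inter> (M - T) \<noteq> z \<inter> (M - T)" by blast
      then show "?g z = 0" by (simp add: id_fun_def)
    qed
  qed (simp add: M_def)
  also have "\<dots> = (\<Sum>c\<in>Pow T. ?g (h c))"
    by (rule sum.reindex_cong[OF \<open>inj_on h (Pow T)\<close> refl refl])
  also have "\<dots> = (\<Sum>c\<in>Pow T. A (x \<inter> T) c * K (c \<union> (x - T)) y)"
  proof (intro sum.cong refl)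
    fix c assume "c \<in> Pow T"
    then have "h c \<inter> T = c" and "x \<inter> (M - T) = h c \<inter> (M - T)"
      using x by (auto simp: h_def M_def)
    then show "?g (h c) = A (x \<inter> T) c * K (c \<union> (x - T)) y"
      by (simp add: id_fun_def h_def)
  qed
  finally show "(\<Sum>z\<in>Pow {..<m}. A (x \<inter> T) (z \<inter> T) * id_fun (x \<inter> ({..<m} - T)) (z \<inter> ({..<m} - T)) * K z y)
      = (\<Sum>c\<in>Pow T. A (x \<inter> T) c * K (c \<union> (x - T)) y)"
    by (simp add: M_def)
qed

lemma tensor_split_mult_same:
  assumes "T \<subseteq> {..<m}"
  shows "tensor_split m T A id_fun * tensor_split m T B id_fun =
    tensor_split m T (\<lambda>x y. \<Sum>c\<in>Pow T. A x c * B c y) id_fun"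
  unfolding tensor_split_eq_kernel_mat[of m T B] tensor_split_id_fun_mult[OF assms]
  unfolding tensor_split_eq_kernel_mat
proof (rule kernel_mat_cong)
  fix x y assume "x \<subseteq> {..<m}"
  then have "(c \<union> (x - T)) \<inter> T = c \<and> (c \<union> (x - T)) \<inter> ({..<m} - T) = x \<inter> ({..<m} - T)"
    if "c \<in> Pow T" for c
    using that by blast
  then show "(\<Sum>c\<in>Pow T. A (x \<inter> T) c * (B ((c \<union> (x - T)) \<inter> T) (y \<inter> T) *
        id_fun ((c \<union> (x - T)) \<inter> ({..<m} - T)) (y \<inter> ({..<m} - T)))) =
      (\<Sum>c\<in>Pow T. A (x \<inter> T) c * B c (y \<inter> T)) * id_fun (x \<inter> ({..<m} - T)) (y \<inter> ({..<m} - T))"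
    by (simp add: sum_distrib_right mult.assoc)
qed

lemma tensor_split_mult_disjoint:
  assumes T: "T \<subseteq> {..<m}" and U: "U \<subseteq> {..<m}" and TU: "T \<inter> U = {}"
  shows "tensor_split m T A id_fun * tensor_split m U B id_fun =
    tensor_split m (T \<union> U) (\<lambda>x y. A (x \<inter> T) (y \<inter> T) * B (x \<inter> U) (y \<inter> U)) id_fun"
  unfolding tensor_split_eq_kernel_mat[of m U B] tensor_split_id_fun_mult[OF T]
  unfolding tensor_split_eq_kernel_mat
proof (rule kernel_mat_cong)
  fix x y assume x: "x \<subseteq> {..<m}" and y: "y \<subseteq> {..<m}"
  define M where "M = {..<m}"
  have U_part: "(c \<union> (x - T)) \<inter> U = x \<inter> U" if "c \<in> Pow T" for c
    using that TU by blast
  have rest_eq: "id_fun ((c \<union> (x - T)) \<inter> (M - U)) (y \<inter> (M - U)) =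
      (if c = y \<inter> T then id_fun (x \<inter> (M - (T \<union> U))) (y \<inter> (M - (T \<union> U))) else 0)"
    if c: "c \<in> Pow T" for c
  proof -
    have "(c \<union> (x - T)) \<inter> (M - U) = c \<union> x \<inter> (M - (T \<union> U))"
      using c x TU T by (auto simp: M_def)
    moreover have "y \<inter> (M - U) = y \<inter> T \<union> y \<inter> (M - (T \<union> U))"
      using TU T by (auto simp: M_def)
    moreover have "c \<union> x \<inter> (M - (T \<union> U)) = y \<inter> T \<union> y \<inter> (M - (T \<union> U)) \<longleftrightarrow>
        c = y \<inter> T \<and> x \<inter> (M - (T \<union> U)) = y \<inter> (M - (T \<union> U))"
      using c by blast
    ultimately show ?thesis by (simp add: id_fun_def)
  qed
  have "(\<Sum>c\<in>Pow T. A (x \<inter> T) c * (B ((c \<union> (x - T)) \<inter> U) (y \<inter> U) *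
        id_fun ((c \<union> (x - T)) \<inter> (M - U)) (y \<inter> (M - U)))) =
      (\<Sum>c\<in>Pow T. if c = y \<inter> T then A (x \<inter> T) c * B (x \<inter> U) (y \<inter> U) *
        id_fun (x \<inter> (M - (T \<union> U))) (y \<inter> (M - (T \<union> U))) else 0)"
    using U_part rest_eq by (intro sum.cong) auto
  also have "\<dots> = A (x \<inter> T) (y \<inter> T) * B (x \<inter> U) (y \<inter> U) *
      id_fun (x \<inter> (M - (T \<union> U))) (y \<inter> (M - (T \<union> U)))"
    using finite_subset[OF T] by simp
  finally show "(\<Sum>c\<in>Pow T. A (x \<inter> T) c * (B ((c \<union> (x - T)) \<inter> U) (y \<inter> U) *
        id_fun ((c \<union> (x - T)) \<inter> ({..<m} - U)) (y \<inter> ({..<m} - U)))) =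
      A (x \<inter> (T \<union> U) \<inter> T) (y \<inter> (T \<union> U) \<inter> T) * B (x \<inter> (T \<union> U) \<inter> U) (y \<inter> (T \<union> U) \<inter> U) *
      id_fun (x \<inter> ({..<m} - (T \<union> U))) (y \<inter> ({..<m} - (T \<union> U)))"
    using TU by (simp add: M_def Int_assoc Int_absorb2)
qed

lemma supported_on_mult:
  "T \<subseteq> {..<m} \<Longrightarrow> supported_on m T A \<Longrightarrow> supported_on m T B \<Longrightarrow> supported_on m T (A * B)"
  unfolding supported_on_def using tensor_split_mult_same by blast

lemma supported_on_add:
  "supported_on m T A \<Longrightarrow> supported_on m T B \<Longrightarrow> supported_on m T (A + B)"
  unfolding supported_on_def using tensor_split_add by metis

lemma supported_on_smult: "supported_on m T A \<Longrightarrow> supported_on m T (c \<cdot>\<^sub>m A)"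
  unfolding supported_on_def using tensor_split_smult by metis

lemma supported_on_one: "supported_on m T (1\<^sub>m (2^m))"
proof -
  have "tensor_split m T id_fun id_fun = kernel_mat m id_fun"
    unfolding tensor_split_eq_kernel_mat by (rule kernel_mat_cong) (auto simp: id_fun_def)
  then show ?thesis unfolding supported_on_def kernel_mat_id_fun by metis
qed

lemma supported_on_disjoint_commute:
  assumes "T \<subseteq> {..<m}" "U \<subseteq> {..<m}" "T \<inter> U = {}"
    and "supported_on m T A" "supported_on m U B"
  shows "A * B = B * A"
proof -
  obtain AT BU where "A = tensor_split m T AT id_fun" "B = tensor_split m U BU id_fun"
    using assms(4,5) unfolding supported_on_def by blast
  moreover have "tensor_split m T AT id_fun * tensor_split m U BU id_fun =
      tensor_split m U BU id_fun * tensor_split m T AT id_fun"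
  proof -
    have "(\<lambda>x y. AT (x \<inter> T) (y \<inter> T) * BU (x \<inter> U) (y \<inter> U)) =
        (\<lambda>x y. BU (x \<inter> U) (y \<inter> U) * AT (x \<inter> T) (y \<inter> T))"
      by (simp add: mult.commute)
    moreover have "T \<union> U = U \<union> T" "U \<inter> T = {}" using assms(3) by auto
    ultimately show ?thesis
      using assms(1-3) by (simp only: tensor_split_mult_disjoint)
  qed
  ultimately show ?thesis by simp
qed

lemma pauli_mat_flip_entry_nonzero:
  assumes "k < 4"
  shows "pauli_mat k $$ (0, if k = 1 \<or> k = 2 then 1 else 0) \<noteq> 0"
proof -
  have "k = 0 \<or> k = 1 \<or> k = 2 \<or> k = 3" using assms by auto
  then show ?thesis by (auto simp: pauli_mat_def mat_of_rows_list_def)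
qed

lemma pauli_fun_flip_entry_nonzero:
  assumes "c \<noteq> 0" "finite T" "\<forall>i\<in>T. p i < 4"
  shows "pauli_fun c p T {} {i\<in>T. p i = 1 \<or> p i = 2} \<noteq> 0"
proof -
  have "pauli_mat (p i) $$ (ind {} i, ind {i\<in>T. p i = 1 \<or> p i = 2} i) \<noteq> 0" if "i \<in> T" for i
  proof -
    have "ind {} i = 0" "ind {i\<in>T. p i = 1 \<or> p i = 2} i = (if p i = 1 \<or> p i = 2 then 1 else 0)"
      using that by (simp_all add: ind_def)
    then show ?thesis using pauli_mat_flip_entry_nonzero[of "p i"] assms(3) that by simp
  qed
  then show ?thesis using assms(1,2) by (simp add: pauli_fun_def prod_zero_iff)
qed

lemma is_pauli_fun_row_nonzero:
  assumes "is_pauli_fun T P" "finite T"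
  obtains Y where "Y \<subseteq> T" "P {} Y \<noteq> 0"
proof -
  obtain c p where c: "c \<in> pauli_phases" and p: "\<forall>i. p i < 4" and P: "P = pauli_fun c p T"
    using assms(1) unfolding is_pauli_fun_def by blast
  have "c \<noteq> 0" using c by (auto simp: pauli_phases_def)
  then have "P {} {i\<in>T. p i = 1 \<or> p i = 2} \<noteq> 0"
    unfolding P using assms(2) p by (intro pauli_fun_flip_entry_nonzero) auto
  then show ?thesis by (intro that[of "{i\<in>T. p i = 1 \<or> p i = 2}"]) auto
qed

definition zero_proj :: "nat set \<Rightarrow> nat set \<Rightarrow> complex" where
  "zero_proj x y = (if x = {} \<and> y = {} then 1 else 0)"

lemma zero_proj_not_commute:
  assumes j: "j < m" and Y: "Y \<subseteq> {..<m}" "j \<in> Y" and K: "K {} Y \<noteq> 0"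
  shows "tensor_split m {j} zero_proj id_fun * kernel_mat m K \<noteq>
    kernel_mat m K * tensor_split m {j} zero_proj id_fun"
proof
  let ?P = "\<lambda>x y. zero_proj (x \<inter> {j}) (y \<inter> {j}) * id_fun (x \<inter> ({..<m} - {j})) (y \<inter> ({..<m} - {j}))"
  assume "tensor_split m {j} zero_proj id_fun * kernel_mat m K =
    kernel_mat m K * tensor_split m {j} zero_proj id_fun"
  moreover have "tensor_split m {j} zero_proj id_fun * kernel_mat m K =
      kernel_mat m (\<lambda>x y. \<Sum>c\<in>Pow {j}. zero_proj (x \<inter> {j}) c * K (c \<union> (x - {j})) y)"
    using j by (intro tensor_split_id_fun_mult) simp
  moreover have "kernel_mat m K * tensor_split m {j} zero_proj id_fun =
      kernel_mat m (\<lambda>x y. \<Sum>z\<in>Pow {..<m}. K x z * ?P z y)"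
    unfolding tensor_split_eq_kernel_mat kernel_mat_mult ..
  ultimately have "kernel_mat m (\<lambda>x y. \<Sum>c\<in>Pow {j}. zero_proj (x \<inter> {j}) c * K (c \<union> (x - {j})) y) =
      kernel_mat m (\<lambda>x y. \<Sum>z\<in>Pow {..<m}. K x z * ?P z y)"
    by (simp only:)
  from kernel_mat_eqD[OF this, of "{}" Y]
  have "(\<Sum>c\<in>Pow {j}. zero_proj {} c * K c Y) = (\<Sum>z\<in>Pow {..<m}. K {} z * ?P z Y)"
    using Y by simp
  moreover have "(\<Sum>c\<in>Pow {j}. zero_proj {} c * K c Y) = K {} Y"
  proof -
    have "Pow {j} = {{}, {j}}" by blast
    then show ?thesis by (simp add: zero_proj_def)
  qed
  moreover have "(\<Sum>z\<in>Pow {..<m}. K {} z * ?P z Y) = 0"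
  proof -
    have "Y \<inter> {j} \<noteq> {}" using Y by blast
    then show ?thesis by (simp add: zero_proj_def)
  qed
  ultimately show False using K by simp
qed

definition pauli_X_at :: "nat \<Rightarrow> nat \<Rightarrow> nat" where
  "pauli_X_at j i = (if i = j then 1 else 0)"

lemma is_pauli_fun_pauli_X_at: "is_pauli_fun T (pauli_fun 1 (pauli_X_at j) T)"
  unfolding is_pauli_fun_def pauli_phases_def pauli_X_at_def
  by (intro exI[of _ 1] exI[of _ "\<lambda>i. if i = j then 1 else 0"]) auto

lemma pauli_X_at_not_commute_zero_proj:
  assumes j: "j \<in> S" and S: "S \<subseteq> {..<m}" and PJ: "is_pauli_fun ({..<m} - S) PJ"
  shows "tensor_split m {j} zero_proj id_fun * tensor_split m S (pauli_fun 1 (pauli_X_at j) S) PJ \<noteq>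
    tensor_split m S (pauli_fun 1 (pauli_X_at j) S) PJ * tensor_split m {j} zero_proj id_fun"
proof -
  define Q where "Q x y = pauli_fun 1 (pauli_X_at j) S (x \<inter> S) (y \<inter> S) *
    PJ (x \<inter> ({..<m} - S)) (y \<inter> ({..<m} - S))" for x y
  have "{i \<in> S. pauli_X_at j i = 1 \<or> pauli_X_at j i = 2} = {j}" "\<forall>i\<in>S. pauli_X_at j i < 4"
    using j by (auto simp: pauli_X_at_def)
  then have X_entry: "pauli_fun 1 (pauli_X_at j) S {} {j} \<noteq> 0"
    using pauli_fun_flip_entry_nonzero[of 1 S "pauli_X_at j"] finite_subset[OF S] by simp
  obtain Y where Y: "Y \<subseteq> {..<m} - S" "PJ {} Y \<noteq> 0"
    using is_pauli_fun_row_nonzero[OF PJ] by blast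
  have "insert j Y \<inter> S = {j}" "insert j Y \<inter> ({..<m} - S) = Y"
    using j Y(1) by auto
  then have "Q {} (insert j Y) \<noteq> 0"
    using X_entry Y(2) by (simp add: Q_def)
  moreover have "tensor_split m S (pauli_fun 1 (pauli_X_at j) S) PJ = kernel_mat m Q"
    unfolding tensor_split_eq_kernel_mat Q_def ..
  ultimately show ?thesis
    using zero_proj_not_commute[of j m "insert j Y" Q] j S Y(1) by auto
qed

definition bare_implementable ::
    "nat \<Rightarrow> nat \<Rightarrow> complex mat \<Rightarrow> nat set \<Rightarrow> nat set \<Rightarrow> (nat set \<Rightarrow> nat set \<Rightarrow> complex) \<Rightarrow> bool" where
  "bare_implementable n nL V Q T K \<longleftrightarrow> (\<exists>A. A \<in> carrier_mat (2^n) (2^n) \<and> CSP V A \<and>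
     supported_on n Q A \<and> mat_adjoint V * A * V = tensor_split nL T K id_fun)"

lemma correctable_iff_bare_implementable:
  "correctable n nL V S R \<longleftrightarrow> (\<forall>K. bare_implementable n nL V ({..<n} - R) S K)"
  by (simp add: correctable_def bare_implementable_def)

lemma assoc_mult_mat_dim:
  assumes "dim_col A = dim_row B" "dim_col B = dim_row C"
  shows "A * B * C = A * (B * C)"
  using assms by (intro assoc_mult_mat carrier_matI) auto

locale encoding_isometry =
  fixes V :: "complex mat" and n nL :: nat
  assumes carrier_V: "V \<in> carrier_mat (2^n) (2^nL)"
    and adjoint_mult_V: "mat_adjoint V * V = 1\<^sub>m (2^nL)"
begin

lemma carrier_adjoint_V: "mat_adjoint V \<in> carrier_mat (2^nL) (2^n)"
  using carrier_V by (auto simp: mat_adjoint_def)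

lemma carrier_code_proj: "code_proj V \<in> carrier_mat (2^n) (2^n)"
  using carrier_V carrier_adjoint_V by (simp add: code_proj_def)

lemma CSP_mult:
  assumes A: "A \<in> carrier_mat (2^n) (2^n)" and B: "B \<in> carrier_mat (2^n) (2^n)"
    and "CSP V A" "CSP V B"
  shows "CSP V (A * B)"
proof -
  note dims = carrier_matD[OF A] carrier_matD[OF B] carrier_matD[OF carrier_code_proj]
  have "A * B * code_proj V = A * (code_proj V * B)"
    using dims \<open>CSP V B\<close> by (simp add: CSP_def assoc_mult_mat_dim)
  also have "\<dots> = code_proj V * (A * B)"
    using dims \<open>CSP V A\<close> by (simp add: CSP_def flip: assoc_mult_mat_dim)
  finally show ?thesis unfolding CSP_def .
qed

lemma CSP_add:
  assumes "A \<in> carrier_mat (2^n) (2^n)" "B \<in> carrier_mat (2^n) (2^n)" "CSP V A" "CSP V B"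
  shows "CSP V (A + B)"
  using assms carrier_code_proj by (simp add: CSP_def add_mult_distrib_mat mult_add_distrib_mat)

lemma CSP_smult: "A \<in> carrier_mat (2^n) (2^n) \<Longrightarrow> CSP V A \<Longrightarrow> CSP V (c \<cdot>\<^sub>m A)"
  using carrier_code_proj by (simp add: CSP_def mult_smult_assoc_mat mult_smult_distrib)

lemma CSP_one: "CSP V (1\<^sub>m (2^n))"
  using carrier_code_proj by (simp add: CSP_def)

lemma adjoint_mult_CSP:
  assumes A: "A \<in> carrier_mat (2^n) (2^n)" and B: "B \<in> carrier_mat (2^n) (2^n)" and "CSP V B"
  shows "mat_adjoint V * (A * B) * V = (mat_adjoint V * A * V) * (mat_adjoint V * B * V)"
proof -
  note dims = carrier_matD[OF A] carrier_matD[OF B] carrier_matD[OF carrier_V] carrier_matD[OF carrier_adjoint_V]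
  have "(mat_adjoint V * A * V) * (mat_adjoint V * B * V) = mat_adjoint V * A * (code_proj V * B) * V"
    using dims by (simp add: code_proj_def assoc_mult_mat_dim)
  also have "\<dots> = mat_adjoint V * A * (B * code_proj V) * V"
    using \<open>CSP V B\<close> by (simp add: CSP_def)
  also have "\<dots> = mat_adjoint V * (A * B) * V * (mat_adjoint V * V)"
    using dims by (simp add: code_proj_def assoc_mult_mat_dim)
  also have "\<dots> = mat_adjoint V * (A * B) * V"
    using dims by (simp add: adjoint_mult_V)
  finally show ?thesis ..
qed

lemma bare_implementable_empty: "bare_implementable n nL V Q {} K"
  unfolding bare_implementable_def
proof (intro exI conjI)
  show "mat_adjoint V * (K {} {} \<cdot>\<^sub>m 1\<^sub>m (2^n)) * V = tensor_split nL {} K id_fun"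
  proof -
    have "mat_adjoint V * (K {} {} \<cdot>\<^sub>m 1\<^sub>m (2^n)) = K {} {} \<cdot>\<^sub>m mat_adjoint V"
      using mult_smult_distrib[OF carrier_adjoint_V one_carrier_mat] carrier_adjoint_V by simp
    then show ?thesis
      using carrier_V carrier_adjoint_V
      by (simp add: tensor_split_empty mult_smult_assoc_mat[of _ "2^nL" "2^n"] adjoint_mult_V)
  qed
qed (auto intro: CSP_smult CSP_one supported_on_smult supported_on_one)

lemma bare_implementable_add:
  assumes "bare_implementable n nL V Q T K" "bare_implementable n nL V Q T K'"
  shows "bare_implementable n nL V Q T (\<lambda>x y. K x y + K' x y)"
proof -
  obtain A B where A: "A \<in> carrier_mat (2^n) (2^n)" "CSP V A" "supported_on n Q A"
      "mat_adjoint V * A * V = tensor_split nL T K id_fun"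
    and B: "B \<in> carrier_mat (2^n) (2^n)" "CSP V B" "supported_on n Q B"
      "mat_adjoint V * B * V = tensor_split nL T K' id_fun"
    using assms unfolding bare_implementable_def by blast
  have "mat_adjoint V * (A + B) * V = mat_adjoint V * A * V + mat_adjoint V * B * V"
    using A(1) B(1) carrier_V carrier_adjoint_V
    by (simp add: mult_add_distrib_mat[of _ "2^nL" "2^n"] add_mult_distrib_mat[of _ "2^nL" "2^n"])
  then show ?thesis
    unfolding bare_implementable_def using A B
    by (intro exI[of _ "A + B"]) (simp add: CSP_add supported_on_add tensor_split_add)
qed

lemma bare_implementable_mult_disjoint:
  assumes "Q \<subseteq> {..<n}" "T \<subseteq> {..<nL}" "U \<subseteq> {..<nL}" "T \<inter> U = {}"
    and "bare_implementable n nL V Q T K" "bare_implementable n nL V Q U K'"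
  shows "bare_implementable n nL V Q (T \<union> U) (\<lambda>x y. K (x \<inter> T) (y \<inter> T) * K' (x \<inter> U) (y \<inter> U))"
proof -
  obtain A B where A: "A \<in> carrier_mat (2^n) (2^n)" "CSP V A" "supported_on n Q A"
      "mat_adjoint V * A * V = tensor_split nL T K id_fun"
    and B: "B \<in> carrier_mat (2^n) (2^n)" "CSP V B" "supported_on n Q B"
      "mat_adjoint V * B * V = tensor_split nL U K' id_fun"
    using assms(5,6) unfolding bare_implementable_def by blast
  have "mat_adjoint V * (A * B) * V =
      tensor_split nL (T \<union> U) (\<lambda>x y. K (x \<inter> T) (y \<inter> T) * K' (x \<inter> U) (y \<inter> U)) id_fun"
    using A B assms(2-4) by (simp add: adjoint_mult_CSP tensor_split_mult_disjoint)
  then show ?thesis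
    unfolding bare_implementable_def using A B assms(1)
    by (intro exI[of _ "A * B"]) (simp add: CSP_mult supported_on_mult)
qed

lemma bare_implementable_cong:
  assumes "bare_implementable n nL V Q T K" "\<And>x y. x \<subseteq> T \<Longrightarrow> y \<subseteq> T \<Longrightarrow> K x y = K' x y"
  shows "bare_implementable n nL V Q T K'"
proof -
  have "tensor_split nL T K id_fun = tensor_split nL T K' id_fun"
    unfolding tensor_split_eq_kernel_mat by (rule kernel_mat_cong) (simp add: assms(2))
  then show ?thesis using assms(1) by (simp add: bare_implementable_def)
qed

lemma bare_implementable_of_singletons:
  assumes Q: "Q \<subseteq> {..<n}" and T: "T \<subseteq> {..<nL}"
    and singletons: "\<And>j E. j \<in> T \<Longrightarrow> bare_implementable n nL V Q {j} E"
  shows "bare_implementable n nL V Q T K"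
proof -
  have "finite T" using T finite_subset by blast
  then show ?thesis using T singletons
  proof (induction T arbitrary: K rule: finite_induct)
    case empty
    show ?case by (rule bare_implementable_empty)
  next
    case (insert j T K)
    \<comment> \<open>expand \<open>K\<close> in the matrix units \<open>|a\<rangle>\<langle>b|\<close> of qubit \<open>j\<close>\<close>
    define G where "G a b = (\<lambda>x y. (if x \<inter> {j} = a \<and> y \<inter> {j} = b then 1 else 0) *
      K (x \<inter> T \<union> a) (y \<inter> T \<union> b))" for a b
    have G: "bare_implementable n nL V Q (insert j T) (G a b)" for a b
    proof -
      have "bare_implementable n nL V Q ({j} \<union> T) (\<lambda>x y.
          (\<lambda>u v. if u = a \<and> v = b then 1 else 0) (x \<inter> {j}) (y \<inter> {j}) *
          (\<lambda>u v. K (u \<union> a) (v \<union> b)) (x \<inter> T) (y \<inter> T))"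
        using insert Q by (intro bare_implementable_mult_disjoint) auto
      then show ?thesis by (simp add: G_def)
    qed
    have sum: "bare_implementable n nL V Q (insert j T)
        (\<lambda>x y. (G {} {} x y + G {} {j} x y) + (G {j} {} x y + G {j} {j} x y))"
      by (intro bare_implementable_add G)
    have "(G {} {} x y + G {} {j} x y) + (G {j} {} x y + G {j} {j} x y) = K x y"
      if "x \<subseteq> insert j T" "y \<subseteq> insert j T" for x y
    proof -
      have "x \<inter> T \<union> x \<inter> {j} = x" "y \<inter> T \<union> y \<inter> {j} = y" using that by auto
      then show ?thesis
        unfolding G_def by (cases "j \<in> x"; cases "j \<in> y") (auto simp: Int_insert_right)
    qed
    with sum show ?case by (rule bare_implementable_cong)
  qed
qed

lemma correctable_of_singletons:
  assumes "S \<subseteq> {..<nL}" "\<And>j. j \<in> S \<Longrightarrow> correctable n nL V {j} R"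
  shows "correctable n nL V S R"
  using assms unfolding correctable_iff_bare_implementable
  by (blast intro: bare_implementable_of_singletons)

lemma dressed_cleanable_disjoint_entanglement_wedge:
  assumes R: "R \<subseteq> {..<n}" and S: "S \<subseteq> {..<nL}" and cleanable: "dressed_cleanable n nL V S R"
  shows "S \<inter> entanglement_wedge n nL V R = {}"
proof (rule ccontr)
  assume "S \<inter> entanglement_wedge n nL V R \<noteq> {}"
  then obtain j where j: "j \<in> S" and "correctable n nL V {j} ({..<n} - R)"
    unfolding entanglement_wedge_def by blast
  moreover have "{..<n} - ({..<n} - R) = R" using R by blast
  ultimately obtain A where A: "A \<in> carrier_mat (2^n) (2^n)" "CSP V A" "supported_on n R A"
      "mat_adjoint V * A * V = tensor_split nL {j} zero_proj id_fun"
    unfolding correctable_def by metis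
  obtain B PJ where PJ: "is_pauli_fun ({..<nL} - S) PJ"
    and B: "B \<in> carrier_mat (2^n) (2^n)" "CSP V B" "supported_on n ({..<n} - R) B"
      "mat_adjoint V * B * V = tensor_split nL S (pauli_fun 1 (pauli_X_at j) S) PJ"
    using cleanable is_pauli_fun_pauli_X_at unfolding dressed_cleanable_def by blast
  have "(mat_adjoint V * A * V) * (mat_adjoint V * B * V) = mat_adjoint V * (A * B) * V"
    using A B by (simp add: adjoint_mult_CSP)
  also have "A * B = B * A"
    using R A(3) B(3) by (intro supported_on_disjoint_commute) auto
  also have "mat_adjoint V * (B * A) * V = (mat_adjoint V * B * V) * (mat_adjoint V * A * V)"
    using A B by (simp add: adjoint_mult_CSP)
  finally show False
    unfolding A(4) B(4) using pauli_X_at_not_commute_zero_proj[OF j S PJ] by blast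
qed

end

lemma stabilizer_code_encoding_isometry:
  "stabilizer_code n nL G V \<Longrightarrow> encoding_isometry V n nL"
  by unfold_locales (simp_all add: stabilizer_code_def)

theorem lemma6:
  fixes n nL :: nat and G :: "complex mat set" and V :: "complex mat" and S R :: "nat set"
  assumes "stabilizer_code n nL G V"
    and "S \<subseteq> {..<nL}"
    and "R \<subseteq> {..<n}"
    and "complementary_recovery n nL V R"
    and "dressed_cleanable n nL V S R"
  shows "correctable n nL V S R"
proof -
  interpret encoding_isometry V n nL
    using assms(1) by (rule stabilizer_code_encoding_isometry)
  have "S \<inter> entanglement_wedge n nL V R = {}"
    using assms(3,2,5) by (rule dressed_cleanable_disjoint_entanglement_wedge)
  with assms(2,4) have "S \<subseteq> entanglement_wedge n nL V ({..<n} - R)"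
    unfolding complementary_recovery_def by blast
  moreover have "{..<n} - ({..<n} - R) = R" using assms(3) by blast
  ultimately have "correctable n nL V {j} R" if "j \<in> S" for j
    using that unfolding entanglement_wedge_def by auto
  with assms(2) show ?thesis by (rule correctable_of_singletons)
qed

end
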